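(* For all real $y\ge x\ge0$, $$\lim_{n\to\infty}\frac{\log p([y\log n]+1,[x\log n])}{\log n}=\lim_{n\to\infty}\frac{\log p_1([y\log n],[x\log n])}{\log n}=\lim_{n\to\infty}\frac{\log p_{-1}([y\log n]+1,[x\log n]+1)}{\log n}=-g(x,y).$$
   Context: Let $0<q<p<1$ with $p+q=1$. Define, for integers: $p(L,K)=\binom{L-1}{K}(2p)^Kq^{L-1}p(1-2q)$ for $K\ge0$, $L\ge K+1$; $p_{-1}(L,K)=\binom{L}{K}(2p)^{K-1}q^{L-1}p^2(1-2q)$ for $K\ge1$, $L\ge K$; $p_1(L,K)=\binom{L}{K}(2p)^{K-1}q^{L}p(1-2q)$ for $K\ge1$, $L\ge K$, and $p_1(L,0)=q^L(1-2q)$ for $L\ge0$. Let $g(x,y)=x\log x-y\log y+(y-x)\log(y-x)-x\log(2p)-y\log q$ with the convention $0\log0=0$. $[\cdot]$ denotes the integer part. *)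

theory Defs
  imports Complex_Main
begin

text \<open>The probabilities p(L,K), p_{-1}(L,K), p_1(L,K); parameters p and q (with p + q = 1).
  Arguments outside the stated domains are never used in the statement.\<close>

definition pLK :: "real \<Rightarrow> real \<Rightarrow> nat \<Rightarrow> nat \<Rightarrow> real" where
  "pLK p q L K = real ((L - 1) choose K) * (2*p)^K * q^(L - 1) * p * (1 - 2*q)"

definition pm1LK :: "real \<Rightarrow> real \<Rightarrow> nat \<Rightarrow> nat \<Rightarrow> real" where
  "pm1LK p q L K = real (L choose K) * (2*p)^(K - 1) * q^(L - 1) * p^2 * (1 - 2*q)"

definition pp1LK :: "real \<Rightarrow> real \<Rightarrow> nat \<Rightarrow> nat \<Rightarrow> real" where
  "pp1LK p q L K = (if K = 0 then q^L * (1 - 2*q)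
                    else real (L choose K) * (2*p)^(K - 1) * q^L * p * (1 - 2*q))"

definition xlogx :: "real \<Rightarrow> real" where
  "xlogx t = (if t = 0 then 0 else t * ln t)"

definition gfun :: "real \<Rightarrow> real \<Rightarrow> real \<Rightarrow> real \<Rightarrow> real" where
  "gfun p q x y = xlogx x - xlogx y + xlogx (y - x) - x * ln (2*p) - y * ln q"

end

theory Submission
  imports Defs "HOL-Real_Asymp.Real_Asymp"
begin

text \<open>Put \<open>N = ln n\<close>, \<open>L \<approx> y N\<close>, \<open>K \<approx> x N\<close>. Each of the three probabilities is a
  binomial coefficient times \<open>(2p)\<^sup>K q\<^sup>L\<close> times a factor bounded away from 0 and \<open>\<infinity>\<close>, so
  only \<open>ln (L choose K)\<close> needs care. The elementary Stirling bounds give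
  \<open>ln (L choose K) = L ln L - K ln K - (L - K) ln (L - K) + O(ln L)\<close>, and since
  \<open>t \<mapsto> t ln t\<close> is homogeneous up to a term linear in \<open>t\<close> (which cancels, as
  \<open>L = K + (L - K)\<close>), the main part divided by \<open>N\<close>
  equals \<open>(L/N) ln (L/N) - (K/N) ln (K/N) - ((L - K)/N) ln ((L - K)/N)\<close>; continuity of
  \<open>t ln t\<close> at \<open>0\<close> then yields the limit.\<close>

lemma xlogx_eq_mult_ln: "xlogx t = t * ln t"
  by (simp add: xlogx_def)

lemma ln_fact_Suc: "ln (fact (Suc m) :: real) = ln (real m + 1) + ln (fact m)"
  by (simp add: ln_mult add.commute)

lemma ln_fact_ge: "real m * ln (real m) - real m \<le> ln (fact m)"
proof (induction m)
  case 0
  then show ?case by simp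
next
  case (Suc m)
  have "real m * (ln (real m + 1) - ln (real m)) \<le> 1"
  proof (cases "m = 0")
    case False
    then have "ln ((real m + 1) / real m) \<le> (real m + 1) / real m - 1"
      by (intro ln_le_minus_one) simp
    with False show ?thesis
      by (simp add: ln_div field_simps)
  qed simp
  then show ?case
    using Suc.IH unfolding ln_fact_Suc by (simp add: algebra_simps)
qed

lemma ln_fact_le: "ln (fact m) \<le> real m * ln (real m) - real m + ln (real m) + 1"
proof (induction m)
  case 0
  then show ?case by simp
next
  case (Suc m)
  show ?case
  proof (cases "m = 0")
    case False
    then have "ln (real m / (real m + 1)) \<le> real m / (real m + 1) - 1"
      by (intro ln_le_minus_one) simp
    with False have "1 \<le> (real m + 1) * (ln (real m + 1) - ln (real m))"
      by (simp add: ln_div field_simps)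
    then show ?thesis
      using Suc.IH unfolding ln_fact_Suc by (simp add: algebra_simps)
  qed simp
qed

lemma ln_binomial_approx:
  assumes "K \<le> L"
  shows "\<bar>ln (real (L choose K)) - (xlogx (real L) - xlogx (real K) - xlogx (real (L - K)))\<bar>
           \<le> 2 * ln (real L + 1) + 2"
proof -
  have binomial: "ln (real (L choose K)) = ln (fact L) - ln (fact K) - ln (fact (L - K))"
    by (simp add: binomial_fact[OF assms] ln_div ln_mult)
  have ln_le: "ln (real m) \<le> ln (real L + 1)" if "m \<le> L" for m
    using that by (cases "m = 0") auto
  show ?thesis
    using ln_le[OF order_refl] ln_le[OF assms] ln_le[OF diff_le_self[of L K]]
      of_nat_diff[OF assms, where 'a = real]
      ln_fact_ge[of L] ln_fact_ge[of K] ln_fact_ge[of "L - K"]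
      ln_fact_le[of L] ln_fact_le[of K] ln_fact_le[of "L - K"]
    unfolding binomial xlogx_eq_mult_ln abs_le_iff by (intro conjI; linarith)
qed

lemma xlogx_divide:
  assumes "0 < N" "0 \<le> a"
  shows "N * xlogx (a / N) = xlogx a - a * ln N"
  using assms by (cases "a = 0") (simp_all add: xlogx_eq_mult_ln ln_div algebra_simps)

lemma continuous_on_xlogx: "continuous_on {0..} xlogx"
proof -
  have "((\<lambda>t. t * ln t) \<longlongrightarrow> a * ln a) (at a within {0..})" if "0 \<le> a" for a :: real
  proof (cases "a = 0")
    case True
    have "((\<lambda>t::real. t * ln t) \<longlongrightarrow> 0 * ln 0) (at_right 0)"
      by real_asymp
    with True show ?thesis
      by (simp add: at_within_Ici_at_right)
  next
    case False
    with that have "isCont (\<lambda>t. t * ln t) a"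
      by (intro continuous_intros) auto
    then show ?thesis
      by (metis isCont_def tendsto_within_subset subset_UNIV)
  qed
  then show ?thesis
    by (simp add: continuous_on_def xlogx_eq_mult_ln[abs_def])
qed

lemma tendsto_xlogx:
  assumes "(f \<longlongrightarrow> l) F" "0 \<le> l" "eventually (\<lambda>n. 0 \<le> f n) F"
  shows "((\<lambda>n. xlogx (f n)) \<longlongrightarrow> xlogx l) F"
  using continuous_on_tendsto_compose[OF continuous_on_xlogx assms(1)] assms(2,3)
  by (simp add: o_def)

lemma tendsto_bounded_divide_at_top:
  fixes g N :: "'a \<Rightarrow> real"
  assumes N: "filterlim N at_top F" and g: "eventually (\<lambda>n. \<bar>g n\<bar> \<le> M) F"
  shows "((\<lambda>n. g n / N n) \<longlongrightarrow> 0) F"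
proof (rule tendsto_0_le[OF tendsto_inverse_0_at_top[OF N]])
  show "eventually (\<lambda>n. norm (g n / N n) \<le> norm (inverse (N n)) * M) F"
    using g by eventually_elim (simp add: abs_mult divide_inverse mult_right_mono mult.commute)
qed

lemma tendsto_nat_floor_mult_divide:
  fixes N :: "'a \<Rightarrow> real"
  assumes "0 \<le> c" and N: "filterlim N at_top F"
  shows "((\<lambda>n. real (nat \<lfloor>c * N n\<rfloor>) / N n) \<longlongrightarrow> c) F"
proof -
  have pos: "eventually (\<lambda>n. 0 < N n) F"
    using N by (simp add: filterlim_at_top_dense)
  have "eventually (\<lambda>n. \<bar>real (nat \<lfloor>c * N n\<rfloor>) - c * N n\<bar> \<le> 1) F"
    using pos by eventually_elim
      (use \<open>0 \<le> c\<close> in \<open>auto simp: abs_le_iff intro!: mult_nonneg_nonneg; linarith\<close>)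
  then have "((\<lambda>n. (real (nat \<lfloor>c * N n\<rfloor>) - c * N n) / N n + c) \<longlongrightarrow> 0 + c) F"
    by (intro tendsto_add tendsto_bounded_divide_at_top[OF N] tendsto_const)
  moreover have "eventually (\<lambda>n. (real (nat \<lfloor>c * N n\<rfloor>) - c * N n) / N n + c
                                 = real (nat \<lfloor>c * N n\<rfloor>) / N n) F"
    using pos by eventually_elim (simp add: field_simps)
  ultimately show ?thesis by (simp add: Lim_transform_eventually)
qed

lemma tendsto_of_nat_Suc_divide:
  fixes A :: "'a \<Rightarrow> nat" and N :: "'a \<Rightarrow> real"
  assumes N: "filterlim N at_top F" and A: "((\<lambda>n. real (A n) / N n) \<longlongrightarrow> c) F"
  shows "((\<lambda>n. real (A n + 1) / N n) \<longlongrightarrow> c) F"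
  using tendsto_add[OF A real_tendsto_divide_at_top[OF tendsto_const[of 1] N]]
  by (simp add: add_divide_distrib add.commute)

lemma tendsto_ln_add_one_divide_0:
  fixes a N :: "'a \<Rightarrow> real"
  assumes N: "filterlim N at_top F" and a: "((\<lambda>n. a n / N n) \<longlongrightarrow> c) F"
    and nonneg: "\<And>n. 0 \<le> a n"
  shows "((\<lambda>n. ln (a n + 1) / N n) \<longlongrightarrow> 0) F"
proof -
  define C where "C = \<bar>c\<bar> + 2"
  have "((\<lambda>t::real. ln (C * t) / t) \<longlongrightarrow> 0) at_top"
    unfolding C_def by real_asymp
  from filterlim_compose[OF this N]
  have upper: "((\<lambda>n. ln (C * N n) / N n) \<longlongrightarrow> 0) F" .
  have "eventually (\<lambda>n. a n / N n < \<bar>c\<bar> + 1) F"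
    using order_tendstoD(2)[OF a] by (simp add: abs_if)
  moreover have "eventually (\<lambda>n. 1 \<le> N n) F"
    using N by (simp add: filterlim_at_top)
  ultimately have "eventually (\<lambda>n. 0 \<le> ln (a n + 1) / N n
      \<and> ln (a n + 1) / N n \<le> ln (C * N n) / N n) F"
  proof eventually_elim
    case (elim n)
    then have "a n + 1 \<le> C * N n"
      by (simp add: C_def divide_less_eq algebra_simps)
    then have "ln (a n + 1) \<le> ln (C * N n)"
      using nonneg[of n] by simp
    then show ?case
      using elim nonneg[of n] by (simp add: divide_right_mono)
  qed
  then show ?thesis
    by (intro tendsto_sandwich[OF _ _ tendsto_const upper]) (auto elim: eventually_mono)
qed

lemma tendsto_ln_binomial_approx_divide_0:
  fixes N :: "nat \<Rightarrow> real" and K L :: "nat \<Rightarrow> nat"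
  assumes N: "filterlim N at_top sequentially" and KL: "\<And>n. K n \<le> L n"
    and L: "(\<lambda>n. real (L n) / N n) \<longlonglongrightarrow> y"
  shows "(\<lambda>n. (ln (real (L n choose K n))
            - (xlogx (real (L n)) - xlogx (real (K n)) - xlogx (real (L n - K n)))) / N n) \<longlonglongrightarrow> 0"
proof -
  have "(\<lambda>n. 2 * (ln (real (L n) + 1) / N n) + 2 / N n) \<longlonglongrightarrow> 2 * 0 + 0"
    by (intro tendsto_intros tendsto_ln_add_one_divide_0[OF N L] real_tendsto_divide_at_top[OF _ N]) auto
  then have bound: "(\<lambda>n. 2 * (ln (real (L n) + 1) / N n) + 2 / N n) \<longlonglongrightarrow> 0"
    by simp
  show ?thesis
  proof (rule tendsto_0_le[OF bound, where K = 1])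
    have "eventually (\<lambda>n. 0 < N n) sequentially"
      using N by (simp add: filterlim_at_top_dense)
    then show "eventually (\<lambda>n. norm ((ln (real (L n choose K n))
            - (xlogx (real (L n)) - xlogx (real (K n)) - xlogx (real (L n - K n)))) / N n)
          \<le> norm (2 * (ln (real (L n) + 1) / N n) + 2 / N n) * 1) sequentially"
    proof eventually_elim
      case (elim n)
      then show ?case
        using ln_binomial_approx[OF KL[of n]]
        by (simp add: abs_divide divide_right_mono add_divide_distrib[symmetric])
    qed
  qed
qed

lemma tendsto_ln_binomial_divide:
  fixes N :: "nat \<Rightarrow> real" and K L :: "nat \<Rightarrow> nat"
  assumes N: "filterlim N at_top sequentially" and KL: "\<And>n. K n \<le> L n"
    and L: "(\<lambda>n. real (L n) / N n) \<longlonglongrightarrow> y"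
    and K: "(\<lambda>n. real (K n) / N n) \<longlonglongrightarrow> x"
  shows "(\<lambda>n. ln (real (L n choose K n)) / N n) \<longlonglongrightarrow> xlogx y - xlogx x - xlogx (y - x)"
proof -
  define E where "E n = ln (real (L n choose K n))
    - (xlogx (real (L n)) - xlogx (real (K n)) - xlogx (real (L n - K n)))" for n
  have pos: "eventually (\<lambda>n. 0 < N n) sequentially"
    using N by (simp add: filterlim_at_top_dense)
  have "(\<lambda>n. real (L n) / N n - real (K n) / N n) \<longlonglongrightarrow> y - x"
    by (intro tendsto_diff L K)
  then have LK: "(\<lambda>n. real (L n - K n) / N n) \<longlonglongrightarrow> y - x"
    using KL by (simp add: of_nat_diff diff_divide_distrib)
  have nonneg: "eventually (\<lambda>n. 0 \<le> real (a n) / N n) sequentially" for a :: "nat \<Rightarrow> nat"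
    using pos by eventually_elim simp
  have "(\<lambda>n. xlogx (real (L n) / N n) - xlogx (real (K n) / N n) - xlogx (real (L n - K n) / N n)
      + E n / N n) \<longlonglongrightarrow> xlogx y - xlogx x - xlogx (y - x) + 0"
    using L K LK nonneg tendsto_ln_binomial_approx_divide_0[OF N KL L] unfolding E_def
    by (intro tendsto_add tendsto_diff tendsto_xlogx tendsto_lowerbound[OF _ nonneg]) auto
  moreover have "eventually (\<lambda>n. xlogx (real (L n) / N n) - xlogx (real (K n) / N n)
      - xlogx (real (L n - K n) / N n) + E n / N n = ln (real (L n choose K n)) / N n) sequentially"
    using pos
  proof eventually_elim
    case (elim n)
    then show ?case
      using xlogx_divide[OF elim, of "real (L n)"] xlogx_divide[OF elim, of "real (K n)"]
        xlogx_divide[OF elim, of "real (L n - K n)"] KL[of n]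
      unfolding E_def by (simp add: field_simps of_nat_diff)
  qed
  ultimately show ?thesis
    using Lim_transform_eventually by fastforce
qed

lemma tendsto_ln_divide_of_expansion:
  fixes N \<gamma> :: "nat \<Rightarrow> real" and A B K L :: "nat \<Rightarrow> nat"
  assumes N: "filterlim N at_top sequentially"
    and binomial: "(\<lambda>n. ln (real (A n choose B n)) / N n) \<longlonglongrightarrow> H"
    and L: "(\<lambda>n. real (L n) / N n) \<longlonglongrightarrow> y"
    and K: "(\<lambda>n. real (K n) / N n) \<longlonglongrightarrow> x"
    and expansion: "\<And>n. ln (P n)
      = ln (real (A n choose B n)) + real (K n) * \<alpha> + real (L n) * \<beta> + \<gamma> n"
    and bounded: "\<And>n. \<bar>\<gamma> n\<bar> \<le> M"
  shows "(\<lambda>n. ln (P n) / N n) \<longlonglongrightarrow> H + x * \<alpha> + y * \<beta>"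
proof -
  have "(\<lambda>n. ln (real (A n choose B n)) / N n + real (K n) / N n * \<alpha> + real (L n) / N n * \<beta>
      + \<gamma> n / N n) \<longlonglongrightarrow> H + x * \<alpha> + y * \<beta> + 0"
    using bounded
    by (intro tendsto_intros binomial L K tendsto_bounded_divide_at_top[OF N, where M = M]) auto
  then show ?thesis
    by (simp add: expansion add_divide_distrib)
qed

context
  fixes p q :: real
  assumes p_pos: "0 < p" and q_bounds: "0 < q" "2 * q < 1"
begin

lemma ln_pLK:
  assumes "K \<le> L"
  shows "ln (pLK p q (L + 1) K)
    = ln (real (L choose K)) + real K * ln (2 * p) + real L * ln q + (ln p + ln (1 - 2 * q))"
  using assms p_pos q_bounds by (simp add: pLK_def ln_mult ln_realpow distrib_left)

lemma ln_pp1LK: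
  assumes "K \<le> L"
  shows "ln (pp1LK p q L K)
    = ln (real (L choose K)) + real K * ln (2 * p) + real L * ln q
      + (ln (1 - 2 * q) - (if K = 0 then 0 else ln 2))"
proof (cases K)
  case 0
  then show ?thesis
    using q_bounds by (simp add: pp1LK_def ln_mult ln_realpow)
next
  case (Suc k)
  then have pp1: "pp1LK p q L K = real (L choose K) * ((2 * p) ^ K / 2) * q ^ L * (1 - 2 * q)"
    by (simp add: pp1LK_def)
  show ?thesis
    unfolding pp1 using Suc assms p_pos q_bounds
    by (simp add: ln_mult ln_realpow ln_div distrib_left del: power_Suc)
qed

lemma ln_pm1LK:
  assumes "K \<le> L"
  shows "ln (pm1LK p q (L + 1) (K + 1))
    = ln (real ((L + 1) choose (K + 1))) + real K * ln (2 * p) + real L * ln q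
      + (2 * ln p + ln (1 - 2 * q))"
  using assms p_pos q_bounds
  by (simp add: pm1LK_def ln_mult ln_realpow distrib_left del: binomial_Suc_Suc)

lemma tendsto_ln_pLK_divide:
  assumes "filterlim N at_top sequentially" "\<And>n. K n \<le> L n"
    and "(\<lambda>n. real (L n) / N n) \<longlonglongrightarrow> y" "(\<lambda>n. real (K n) / N n) \<longlonglongrightarrow> x"
  shows "(\<lambda>n. ln (pLK p q (L n + 1) (K n)) / N n)
           \<longlonglongrightarrow> xlogx y - xlogx x - xlogx (y - x) + x * ln (2 * p) + y * ln q"
  by (rule tendsto_ln_divide_of_expansion[OF assms(1) tendsto_ln_binomial_divide[OF assms]
        assms(3,4) ln_pLK[OF assms(2)] order_refl])

lemma tendsto_ln_pp1LK_divide: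
  assumes "filterlim N at_top sequentially" "\<And>n. K n \<le> L n"
    and "(\<lambda>n. real (L n) / N n) \<longlonglongrightarrow> y" "(\<lambda>n. real (K n) / N n) \<longlonglongrightarrow> x"
  shows "(\<lambda>n. ln (pp1LK p q (L n) (K n)) / N n)
           \<longlonglongrightarrow> xlogx y - xlogx x - xlogx (y - x) + x * ln (2 * p) + y * ln q"
  by (rule tendsto_ln_divide_of_expansion[OF assms(1) tendsto_ln_binomial_divide[OF assms]
        assms(3,4) ln_pp1LK[OF assms(2)], where M = "\<bar>ln (1 - 2 * q)\<bar> + ln 2"])
    (rule abs_triangle_ineq4[THEN order_trans], simp)

lemma tendsto_ln_pm1LK_divide:
  assumes N: "filterlim N at_top sequentially" and KL: "\<And>n. K n \<le> L n"
    and L: "(\<lambda>n. real (L n) / N n) \<longlonglongrightarrow> y" and K: "(\<lambda>n. real (K n) / N n) \<longlonglongrightarrow> x"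
  shows "(\<lambda>n. ln (pm1LK p q (L n + 1) (K n + 1)) / N n)
           \<longlonglongrightarrow> xlogx y - xlogx x - xlogx (y - x) + x * ln (2 * p) + y * ln q"
proof -
  have "(\<lambda>n. ln (real ((L n + 1) choose (K n + 1))) / N n)
      \<longlonglongrightarrow> xlogx y - xlogx x - xlogx (y - x)"
    using KL
    by (intro tendsto_ln_binomial_divide[OF N] tendsto_of_nat_Suc_divide[OF N] L K) auto
  then show ?thesis
    by (rule tendsto_ln_divide_of_expansion[OF N _ L K ln_pm1LK[OF KL] order_refl])
qed

end

theorem lemma6p1:
  fixes p q x y :: real
  assumes "0 < q" "q < p" "p < 1" "p + q = 1"
    and "0 \<le> x" "x \<le> y"
  shows "((\<lambda>n::nat. ln (pLK p q (nat \<lfloor>y * ln (real n)\<rfloor> + 1) (nat \<lfloor>x * ln (real n)\<rfloor>)) / ln (real n))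
            \<longlonglongrightarrow> - gfun p q x y)
       \<and> ((\<lambda>n::nat. ln (pp1LK p q (nat \<lfloor>y * ln (real n)\<rfloor>) (nat \<lfloor>x * ln (real n)\<rfloor>)) / ln (real n))
            \<longlonglongrightarrow> - gfun p q x y)
       \<and> ((\<lambda>n::nat. ln (pm1LK p q (nat \<lfloor>y * ln (real n)\<rfloor> + 1) (nat \<lfloor>x * ln (real n)\<rfloor> + 1)) / ln (real n))
            \<longlonglongrightarrow> - gfun p q x y)"
proof -
  define N where "N n = ln (real n)" for n :: nat
  define L where "L n = nat \<lfloor>y * N n\<rfloor>" for n
  define K where "K n = nat \<lfloor>x * N n\<rfloor>" for n
  have pq: "0 < p" "0 < q" "2 * q < 1"
    using assms by auto
  have N: "filterlim N at_top sequentially"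
    unfolding N_def using filterlim_compose[OF ln_at_top filterlim_real_sequentially]
    by (simp add: o_def)
  have "0 \<le> N n" for n
    unfolding N_def by (cases "n = 0") auto
  then have KL: "K n \<le> L n" for n
    unfolding K_def L_def using assms by (intro nat_mono floor_mono mult_right_mono) auto
  have L: "(\<lambda>n. real (L n) / N n) \<longlonglongrightarrow> y" and K: "(\<lambda>n. real (K n) / N n) \<longlonglongrightarrow> x"
    unfolding L_def K_def using assms by (auto intro: tendsto_nat_floor_mult_divide[OF _ N])
  have "- gfun p q x y = xlogx y - xlogx x - xlogx (y - x) + x * ln (2 * p) + y * ln q"
    by (simp add: gfun_def)
  then show ?thesis
    using tendsto_ln_pLK_divide[OF pq N KL L K] tendsto_ln_pp1LK_divide[OF pq N KL L K]
      tendsto_ln_pm1LK_divide[OF pq N KL L K]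
    unfolding L_def K_def N_def by simp
qed

end
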